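(* Let $n\ge2$, $\lambda\in(-1,1)$, let $g$ be $\mathscr{R}$-admissible and $G$ be $\mathscr{G}$-admissible. There exists a constant $c=c(n,\lambda,g,G)$ such that $$\mathscr{R}(B^\lambda(m))\le c\,m,\qquad \mathscr{G}(B^\lambda(m))\le c\,m$$ for every $0<m\le|B^\lambda|$.
   Context: $|\cdot|$ is Lebesgue measure. $B^\lambda:=\{x\in B_1(0): x_n>\lambda\}$ and, for $m>0$, $B^\lambda(m):=\frac{m^{1/n}}{|B^\lambda|^{1/n}}(B^\lambda-\lambda e_n)$ (a truncated ball of volume $m$ lying in $\{x_n>0\}$). $\mathscr{R}(E):=\int_E\int_Eg(y-x)\,dy\,dx$, $\mathscr{G}(E):=\int_EG(x_n)\,dx$. $g:\mathbb{R}^n\setminus\{0\}\to(0,\infty)$ is $\mathscr{R}$-admissible if $\mathscr{R}(B_1)<\infty$, $B_1$ the unit ball at $0$. $G:(0,\infty)\to(0,\infty)$ is $\mathscr{G}$-admissible if $\sup_{t\in(0,2)}G(t)<\infty$ and $G(\alpha t)\le\alpha^nG(t)$ for all $\alpha>1,t>0$. *)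

theory Defs
  imports "HOL-Analysis.Analysis"
begin

text \<open>Points of R^n are vectors of type real^'n; the index k plays the role of the
 distinguished n-th coordinate (x_n), and axis k 1 is e_n.\<close>

definition trunc_ball :: "'n::finite \<Rightarrow> real \<Rightarrow> (real^'n) set" where
  "trunc_ball k lam = {x \<in> ball 0 1. x $ k > lam}"

definition trunc_ball_m :: "'n::finite \<Rightarrow> real \<Rightarrow> real \<Rightarrow> (real^'n) set" where
  "trunc_ball_m k lam m =
     (\<lambda>x. ((m / measure lebesgue (trunc_ball k lam)) powr (1 / real CARD('n)))
            *\<^sub>R (x - lam *\<^sub>R axis k 1)) ` trunc_ball k lam"

definition Rfun :: "(real^'n::finite \<Rightarrow> real) \<Rightarrow> (real^'n) set \<Rightarrow> ennreal" where
  "Rfun g E = (\<integral>\<^sup>+ x\<in>E. (\<integral>\<^sup>+ y\<in>E. ennreal (g (y - x)) \<partial>lebesgue) \<partial>lebesgue)"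

definition Gfun :: "'n::finite \<Rightarrow> (real \<Rightarrow> real) \<Rightarrow> (real^'n) set \<Rightarrow> ennreal" where
  "Gfun k G E = (\<integral>\<^sup>+ x\<in>E. ennreal (G (x $ k)) \<partial>lebesgue)"

definition R_admissible :: "(real^'n::finite \<Rightarrow> real) \<Rightarrow> bool" where
  "R_admissible g \<longleftrightarrow> g \<in> borel_measurable lebesgue \<and> (\<forall>x. x \<noteq> 0 \<longrightarrow> g x > 0)
     \<and> Rfun g (ball 0 1) < \<infinity>"

definition G_admissible :: "nat \<Rightarrow> (real \<Rightarrow> real) \<Rightarrow> bool" where
  "G_admissible n G \<longleftrightarrow> set_borel_measurable borel {0<..} G \<and> (\<forall>t>0. G t > 0)
     \<and> bdd_above (G ` {0<..<2})
     \<and> (\<forall>\<alpha> t. \<alpha> > 1 \<longrightarrow> t > 0 \<longrightarrow> G (\<alpha> * t) \<le> \<alpha> ^ n * G t)"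

end

theory Submission imports Defs begin

text \<open>The set \<open>B\<^sup>\<lambda>(m)\<close> is \<open>B\<^sup>\<lambda>\<close> shrunk by the factor \<open>s = (m / |B\<^sup>\<lambda>|)\<^sup>1\<^sup>/\<^sup>n \<le> 1\<close> and
  translated, so it lies in a ball of radius \<open>s\<close> and in the slab \<open>0 < x\<^sub>n < 2\<close>. On that slab
  \<open>G\<close> is bounded, which gives \<open>\<G>(B\<^sup>\<lambda>(m)) \<le> (sup G) m\<close>. For \<open>\<R>\<close> there are two regimes. If
  \<open>s \<le> 1/4\<close>, all differences \<open>y - x\<close> of points of \<open>B\<^sup>\<lambda>(m)\<close> lie in \<open>B\<^sub>1\<^sub>/\<^sub>2\<close>, so
  \<open>\<R>(B\<^sup>\<lambda>(m)) \<le> m \<integral>\<^sub>B\<^sub>1\<^sub>/\<^sub>2 g\<close>, and this integral is finite because \<open>\<R>(B\<^sub>1) < \<infinity>\<close>. If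
  \<open>s > 1/4\<close>, then \<open>m\<close> is bounded below by \<open>4\<^sup>-\<^sup>n |B\<^sup>\<lambda>|\<close> and the translation invariant bound
  \<open>\<R>(B\<^sup>\<lambda>(m)) \<le> \<R>(B\<^sub>1)\<close> suffices.\<close>

lemma lebesgue_measurable_translation: "(\<lambda>x. t + x) \<in> lebesgue \<rightarrow>\<^sub>M lebesgue"
  for t :: "'a::euclidean_space"
  using lebesgue_affine_measurable[of "\<lambda>_. 1" t] by (simp add: euclidean_representation)

lemma distr_lebesgue_translation: "distr lebesgue lebesgue (\<lambda>x. t + x) = lebesgue"
  for t :: "'a::euclidean_space"
  using lebesgue_affine_euclidean[of "\<lambda>_. 1" t]
  by (simp add: euclidean_representation density_1)

text \<open>No measurability of \<open>f\<close> is needed, since translation maps simple functions to simple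
  functions. This matters because the inner integrals in \<^const>\<open>Rfun\<close> are not known to be
  measurable in the outer variable.\<close>

lemma nn_integral_lebesgue_translation_le:
  fixes t :: "'a::euclidean_space" and f :: "'a \<Rightarrow> ennreal"
  shows "(\<integral>\<^sup>+x. f x \<partial>lebesgue) \<le> (\<integral>\<^sup>+x. f (t + x) \<partial>lebesgue)"
  unfolding nn_integral_def
proof (rule SUP_least)
  fix h assume "h \<in> {h. simple_function lebesgue h \<and> h \<le> f}"
  then have h: "simple_function lebesgue h" "h \<le> f" by auto
  have h_transl: "simple_function lebesgue (\<lambda>x. h (t + x))"
    by (rule simple_function_comp[OF lebesgue_measurable_translation h(1)])
  have "integral\<^sup>S lebesgue h = (\<integral>\<^sup>+x. h x \<partial>distr lebesgue lebesgue (\<lambda>x. t + x))"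
    using nn_integral_eq_simple_integral[OF h(1)] by (simp add: distr_lebesgue_translation)
  also have "\<dots> = (\<integral>\<^sup>+x. h (t + x) \<partial>lebesgue)"
    using borel_measurable_simple_function[OF h(1)]
    by (intro nn_integral_distr lebesgue_measurable_translation) simp
  also have "\<dots> = integral\<^sup>S lebesgue (\<lambda>x. h (t + x))"
    using nn_integral_eq_simple_integral[OF h_transl] by simp
  also have "\<dots> \<le> (SUP h' \<in> {h'. simple_function lebesgue h' \<and> h' \<le> (\<lambda>x. f (t + x))}.
                     integral\<^sup>S lebesgue h')"
    by (rule SUP_upper) (use h_transl h(2) in \<open>auto simp: le_fun_def\<close>)
  finally show "integral\<^sup>S lebesgue h \<le> (SUP h' \<in> {h'. simple_function lebesgue h' \<and>
      h' \<le> (\<lambda>x. f (t + x))}. integral\<^sup>S lebesgue h')" .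
qed

lemma nn_integral_lebesgue_translation:
  fixes t :: "'a::euclidean_space" and f :: "'a \<Rightarrow> ennreal"
  shows "(\<integral>\<^sup>+x. f (t + x) \<partial>lebesgue) = (\<integral>\<^sup>+x. f x \<partial>lebesgue)"
  using nn_integral_lebesgue_translation_le[of f t]
    nn_integral_lebesgue_translation_le[of "\<lambda>x. f (t + x)" "-t"]
  by simp

lemma nn_set_integral_lebesgue_translation:
  fixes t :: "'a::euclidean_space" and f :: "'a \<Rightarrow> ennreal"
  shows "(\<integral>\<^sup>+x\<in>(\<lambda>z. t + z) ` E. f x \<partial>lebesgue) = (\<integral>\<^sup>+z\<in>E. f (t + z) \<partial>lebesgue)"
proof -
  have "indicator ((\<lambda>z. t + z) ` E) (t + z) = (indicator E z :: ennreal)" for z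
    by (auto simp: indicator_def)
  then show ?thesis
    using nn_integral_lebesgue_translation[of "\<lambda>x. f x * indicator ((\<lambda>z. t + z) ` E) x" t]
    by simp
qed

lemma Rfun_mono: "E \<subseteq> F \<Longrightarrow> Rfun g E \<le> Rfun g F"
  unfolding Rfun_def
  by (intro order.trans[OF nn_set_integral_set_mono nn_integral_mono])
    (auto intro!: mult_right_mono nn_set_integral_set_mono)

lemma Rfun_translation: "Rfun g ((\<lambda>z. t + z) ` E) = Rfun g E"
  by (simp add: Rfun_def nn_set_integral_lebesgue_translation)

lemma Rfun_double_ball_ge:
  fixes g :: "real^'n::finite \<Rightarrow> real"
  shows "(\<integral>\<^sup>+z\<in>ball 0 r. ennreal (g z) \<partial>lebesgue) * emeasure lebesgue (ball (0::real^'n) r)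
           \<le> Rfun g (ball 0 (2 * r))"
proof -
  let ?K = "\<integral>\<^sup>+z\<in>ball 0 r. ennreal (g z) \<partial>lebesgue"
  have K_le: "?K \<le> (\<integral>\<^sup>+y\<in>ball 0 (2 * r). ennreal (g (y - x)) \<partial>lebesgue)"
    if "x \<in> ball 0 r" for x
  proof -
    have "ball 0 r \<subseteq> (\<lambda>z. -x + z) ` ball 0 (2 * r)"
      using that
      by (auto simp: dist_norm intro!: image_eqI[where x = "x + _"])
        (smt (verit) norm_minus_cancel norm_triangle_ineq4)
    then have "?K \<le> (\<integral>\<^sup>+z\<in>(\<lambda>z. -x + z) ` ball 0 (2 * r). ennreal (g z) \<partial>lebesgue)"
      by (rule nn_set_integral_set_mono)
    then show ?thesis
      unfolding nn_set_integral_lebesgue_translation by (simp add: algebra_simps)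
  qed
  have "?K * emeasure lebesgue (ball (0::real^'n) r)
      = (\<integral>\<^sup>+x\<in>ball (0::real^'n) r. ?K \<partial>lebesgue)"
    by (subst nn_integral_cmult_indicator) simp_all
  also have "\<dots> \<le> (\<integral>\<^sup>+x\<in>ball 0 r.
      (\<integral>\<^sup>+y\<in>ball 0 (2 * r). ennreal (g (y - x)) \<partial>lebesgue) \<partial>lebesgue)"
    using K_le by (intro nn_integral_mono) (auto simp: indicator_def)
  also have "\<dots> \<le> Rfun g (ball 0 (2 * r))"
    unfolding Rfun_def
    by (intro nn_integral_mono mult_left_mono) (auto simp: indicator_def, smt (verit) norm_ge_zero)
  finally show ?thesis .
qed

lemma Rfun_le_of_subset_ball:
  fixes g :: "real^'n::finite \<Rightarrow> real"
  assumes "E \<in> sets lebesgue" and "E \<subseteq> ball p r"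
  shows "Rfun g E \<le> (\<integral>\<^sup>+z\<in>ball 0 (2 * r). ennreal (g z) \<partial>lebesgue) * emeasure lebesgue E"
proof -
  let ?K = "\<integral>\<^sup>+z\<in>ball 0 (2 * r). ennreal (g z) \<partial>lebesgue"
  have inner_le: "(\<integral>\<^sup>+y\<in>E. ennreal (g (y - x)) \<partial>lebesgue) \<le> ?K" if "x \<in> E" for x
  proof -
    have "E \<subseteq> (\<lambda>z. x + z) ` ball 0 (2 * r)"
      using assms(2) that
      by (auto simp: dist_norm intro!: image_eqI[where x = "_ - x"])
        (smt (verit) dist_commute dist_norm dist_triangle mem_ball subsetD)
    then have "(\<integral>\<^sup>+y\<in>E. ennreal (g (y - x)) \<partial>lebesgue)
        \<le> (\<integral>\<^sup>+y\<in>(\<lambda>z. x + z) ` ball 0 (2 * r). ennreal (g (y - x)) \<partial>lebesgue)"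
      by (rule nn_set_integral_set_mono)
    then show ?thesis
      unfolding nn_set_integral_lebesgue_translation by (simp add: algebra_simps)
  qed
  have "Rfun g E \<le> (\<integral>\<^sup>+x\<in>E. ?K \<partial>lebesgue)"
    unfolding Rfun_def using inner_le
    by (intro nn_integral_mono) (auto simp: indicator_def)
  also have "\<dots> = ?K * emeasure lebesgue E"
    using assms(1) by (subst nn_integral_cmult_indicator) simp_all
  finally show ?thesis .
qed

lemma Gfun_le_of_bound:
  assumes "E \<in> sets lebesgue" and "\<And>x. x \<in> E \<Longrightarrow> G (x $ k) \<le> M"
  shows "Gfun k G E \<le> ennreal M * emeasure lebesgue E"
proof -
  have "Gfun k G E \<le> (\<integral>\<^sup>+x\<in>E. ennreal M \<partial>lebesgue)"
    unfolding Gfun_def using assms(2)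
    by (intro nn_integral_mono) (auto simp: indicator_def ennreal_leI)
  also have "\<dots> = ennreal M * emeasure lebesgue E"
    using assms(1) by (subst nn_integral_cmult_indicator) simp_all
  finally show ?thesis .
qed

definition trunc_ball_scale :: "'n::finite \<Rightarrow> real \<Rightarrow> real \<Rightarrow> real" where
  "trunc_ball_scale k lam m = (m / measure lebesgue (trunc_ball k lam)) powr (1 / real CARD('n))"

lemma trunc_ball_m_eq_affine_image:
  "trunc_ball_m k lam m = (\<lambda>x. trunc_ball_scale k lam m *\<^sub>R x
     + (- (trunc_ball_scale k lam m * lam)) *\<^sub>R axis k 1) ` trunc_ball k lam"
  unfolding trunc_ball_m_def trunc_ball_scale_def
  by (rule image_cong) (auto simp: algebra_simps)

lemma trunc_ball_lmeasurable:
  fixes k :: "'n::finite"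
  shows "trunc_ball k lam \<in> lmeasurable"
proof -
  have "trunc_ball k lam = ball 0 1 \<inter> {x. lam < x $ k}"
    by (auto simp: trunc_ball_def)
  moreover have "open {x::real^'n. lam < x $ k}"
    by (rule open_Collect_less) (auto intro: continuous_intros)
  ultimately show ?thesis
    by (auto intro!: lmeasurable_open bounded_Int)
qed

lemma trunc_ball_scale_pos:
  "0 < m \<Longrightarrow> 0 < measure lebesgue (trunc_ball k lam) \<Longrightarrow> 0 < trunc_ball_scale k lam m"
  by (simp add: trunc_ball_scale_def)

lemma trunc_ball_scale_le_1:
  "0 \<le> m \<Longrightarrow> m \<le> measure lebesgue (trunc_ball k lam) \<Longrightarrow> trunc_ball_scale k lam m \<le> 1"
  unfolding trunc_ball_scale_def by (intro powr_le1) (auto simp: divide_le_eq_1)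

lemma trunc_ball_scale_power:
  fixes k :: "'n::finite"
  assumes "0 \<le> m"
  shows "trunc_ball_scale k lam m ^ CARD('n) = m / measure lebesgue (trunc_ball k lam)"
proof -
  define q where "q = m / measure lebesgue (trunc_ball k lam)"
  have "q \<ge> 0"
    using assms by (simp add: q_def)
  then have "(q powr (1 / real CARD('n))) ^ CARD('n) = q"
    by (cases "q = 0") (simp_all add: powr_realpow[symmetric] powr_powr)
  then show ?thesis
    by (simp add: trunc_ball_scale_def q_def)
qed

lemma emeasure_trunc_ball_m:
  fixes k :: "'n::finite"
  assumes "0 \<le> m" and "0 < measure lebesgue (trunc_ball k lam)"
  shows "emeasure lebesgue (trunc_ball_m k lam m) = ennreal m"
proof -
  let ?s = "trunc_ball_scale k lam m"
  have "emeasure lebesgue (trunc_ball_m k lam m)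
      = ennreal (\<bar>?s\<bar> ^ DIM(real^'n)) * emeasure lebesgue (trunc_ball k lam)"
    unfolding trunc_ball_m_eq_affine_image by (rule emeasure_lebesgue_affine)
  also have "\<dots> = ennreal (?s ^ CARD('n) * measure lebesgue (trunc_ball k lam))"
    using trunc_ball_lmeasurable[of k lam]
    by (simp add: trunc_ball_scale_def emeasure_eq_measure2 ennreal_mult)
  also have "\<dots> = ennreal m"
    using assms by (simp add: trunc_ball_scale_power)
  finally show ?thesis .
qed

lemma trunc_ball_m_measurable:
  fixes k :: "'n::finite"
  assumes "0 < m" and "0 < measure lebesgue (trunc_ball k lam)"
  shows "trunc_ball_m k lam m \<in> sets lebesgue"
  using emeasure_trunc_ball_m[of m k lam] assms
    emeasure_notin_sets[of "trunc_ball_m k lam m" lebesgue]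
  by force

lemma trunc_ball_m_subset_ball:
  assumes "0 < trunc_ball_scale k lam m"
  shows "trunc_ball_m k lam m
    \<subseteq> ball ((- (trunc_ball_scale k lam m * lam)) *\<^sub>R axis k 1) (trunc_ball_scale k lam m)"
  using assms unfolding trunc_ball_m_eq_affine_image
  by (auto simp: trunc_ball_def dist_norm)

lemma trunc_ball_m_subset_slab:
  assumes "-1 < lam" and "0 < trunc_ball_scale k lam m" and "trunc_ball_scale k lam m \<le> 1"
  shows "trunc_ball_m k lam m \<subseteq> {x. 0 < x $ k \<and> x $ k < 2}"
proof
  fix x assume "x \<in> trunc_ball_m k lam m"
  then obtain y where y: "y \<in> trunc_ball k lam"
    and x: "x $ k = trunc_ball_scale k lam m * (y $ k - lam)"
    unfolding trunc_ball_m_eq_affine_image by (auto simp: axis_def algebra_simps)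
  have "y $ k < 1"
    using y component_le_norm_cart[of y k] by (auto simp: trunc_ball_def)
  moreover have "lam < y $ k"
    using y by (simp add: trunc_ball_def)
  ultimately have "trunc_ball_scale k lam m * (y $ k - lam) < 1 * 2"
    using assms by (intro mult_le_less_imp_less) auto
  with \<open>lam < y $ k\<close> assms(2) show "x \<in> {x. 0 < x $ k \<and> x $ k < 2}"
    by (simp add: x)
qed

lemma Gfun_trunc_ball_m_le:
  fixes k :: "'n::finite"
  assumes "-1 < lam" and "bdd_above (G ` {0<..<2})"
  obtains c :: real where "0 \<le> c"
    and "\<And>m. 0 < m \<Longrightarrow> m \<le> measure lebesgue (trunc_ball k lam) \<Longrightarrow>
           Gfun k G (trunc_ball_m k lam m) \<le> ennreal (c * m)"
proof -
  obtain M where M: "\<And>t. 0 < t \<Longrightarrow> t < 2 \<Longrightarrow> G t \<le> M"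
    using assms(2) by (auto simp: bdd_above_def) (meson greaterThanLessThan_iff)
  show thesis
  proof (rule that[of "max M 0"])
    fix m assume m: "0 < m" "m \<le> measure lebesgue (trunc_ball k lam)"
    have "Gfun k G (trunc_ball_m k lam m)
        \<le> ennreal (max M 0) * emeasure lebesgue (trunc_ball_m k lam m)"
    proof (rule Gfun_le_of_bound)
      show "trunc_ball_m k lam m \<in> sets lebesgue"
        using m by (intro trunc_ball_m_measurable) auto
      fix x assume "x \<in> trunc_ball_m k lam m"
      then have "0 < x $ k \<and> x $ k < 2"
        using trunc_ball_m_subset_slab[OF assms(1) trunc_ball_scale_pos trunc_ball_scale_le_1] m
        by force
      then show "G (x $ k) \<le> max M 0"
        using M by force
    qed
    also have "\<dots> = ennreal (max M 0 * m)"
      using m by (simp add: emeasure_trunc_ball_m ennreal_mult)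
    finally show "Gfun k G (trunc_ball_m k lam m) \<le> ennreal (max M 0 * m)" .
  qed simp
qed

lemma Rfun_trunc_ball_m_le_Rfun_ball:
  fixes g :: "real^'n::finite \<Rightarrow> real"
  assumes "0 < m" and "m \<le> measure lebesgue (trunc_ball k lam)"
  shows "Rfun g (trunc_ball_m k lam m) \<le> Rfun g (ball 0 1)"
proof -
  let ?s = "trunc_ball_scale k lam m"
  let ?p = "(- (trunc_ball_scale k lam m * lam)) *\<^sub>R axis k 1"
  have "trunc_ball_m k lam m \<subseteq> ball ?p ?s"
    using assms by (intro trunc_ball_m_subset_ball trunc_ball_scale_pos) auto
  also have "\<dots> \<subseteq> ball ?p 1"
    using trunc_ball_scale_le_1[of m k lam] assms by (intro subset_ball) auto
  also have "\<dots> = (\<lambda>z. ?p + z) ` ball 0 1"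
    by (simp only: image_add_ball add_0_left)
  finally have "Rfun g (trunc_ball_m k lam m) \<le> Rfun g ((\<lambda>z. ?p + z) ` ball 0 1)"
    by (rule Rfun_mono)
  then show ?thesis
    by (simp only: Rfun_translation)
qed

lemma Rfun_trunc_ball_m_le_small_scale:
  fixes g :: "real^'n::finite \<Rightarrow> real"
  assumes "0 < m" and "m \<le> measure lebesgue (trunc_ball k lam)"
    and "trunc_ball_scale k lam m \<le> 1/4"
  shows "Rfun g (trunc_ball_m k lam m)
    \<le> (\<integral>\<^sup>+z\<in>ball 0 (1/2). ennreal (g z) \<partial>lebesgue) * ennreal m"
proof -
  let ?s = "trunc_ball_scale k lam m"
  let ?p = "(- (trunc_ball_scale k lam m * lam)) *\<^sub>R axis k 1"
  have "trunc_ball_m k lam m \<subseteq> ball ?p ?s"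
    using assms by (intro trunc_ball_m_subset_ball trunc_ball_scale_pos) auto
  also have "\<dots> \<subseteq> ball ?p (1/4)"
    using assms(3) by (rule subset_ball)
  finally have "Rfun g (trunc_ball_m k lam m)
      \<le> (\<integral>\<^sup>+z\<in>ball 0 (2 * (1/4)). ennreal (g z) \<partial>lebesgue)
         * emeasure lebesgue (trunc_ball_m k lam m)"
    using assms by (intro Rfun_le_of_subset_ball trunc_ball_m_measurable) auto
  then show ?thesis
    using assms by (simp add: emeasure_trunc_ball_m)
qed

lemma nn_set_integral_half_ball_finite:
  fixes g :: "real^'n::finite \<Rightarrow> real"
  assumes "Rfun g (ball 0 1) < \<infinity>"
  shows "(\<integral>\<^sup>+z\<in>ball 0 (1/2). ennreal (g z) \<partial>lebesgue) < \<infinity>"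
proof -
  have "(\<integral>\<^sup>+z\<in>ball 0 (1/2). ennreal (g z) \<partial>lebesgue)
      * emeasure lebesgue (ball (0::real^'n) (1/2)) < \<infinity>"
    using Rfun_double_ball_ge[of g "1/2"] assms by simp
  moreover have "0 < emeasure lebesgue (ball (0::real^'n) (1/2))"
    using content_ball_pos[of "1/2" "0::real^'n"]
    by (simp add: emeasure_eq_measure2 measure_completion)
  ultimately show ?thesis
    by (auto simp: ennreal_mult_less_top)
qed

lemma Rfun_trunc_ball_m_le:
  fixes g :: "real^'n::finite \<Rightarrow> real" and k :: "'n"
  assumes "Rfun g (ball 0 1) < \<infinity>"
  obtains c :: real where "0 \<le> c"
    and "\<And>m. 0 < m \<Longrightarrow> m \<le> measure lebesgue (trunc_ball k lam) \<Longrightarrow>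
           Rfun g (trunc_ball_m k lam m) \<le> ennreal (c * m)"
proof -
  define V where "V = measure lebesgue (trunc_ball k lam)"
  define K where "K = (\<integral>\<^sup>+z\<in>ball 0 (1/2). ennreal (g z) \<partial>lebesgue)"
  define R where "R = enn2real (Rfun g (ball 0 1))"
  have K: "K < \<infinity>"
    unfolding K_def by (rule nn_set_integral_half_ball_finite[OF assms])
  have R: "Rfun g (ball 0 1) = ennreal R"
    using assms by (simp add: R_def ennreal_enn2real_if)
  show thesis
  proof (rule that[of "enn2real K + R * 4 ^ CARD('n) / V"])
    show "0 \<le> enn2real K + R * 4 ^ CARD('n) / V"
      by (simp add: R_def V_def)
    fix m assume m: "0 < m" "m \<le> measure lebesgue (trunc_ball k lam)"
    have c_terms_nonneg: "R * 4 ^ CARD('n) / V * m \<ge> 0" "enn2real K * m \<ge> 0"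
      using m by (simp_all add: R_def V_def)
    show "Rfun g (trunc_ball_m k lam m) \<le> ennreal ((enn2real K + R * 4 ^ CARD('n) / V) * m)"
    proof (cases "trunc_ball_scale k lam m \<le> 1/4")
      case True
      have "Rfun g (trunc_ball_m k lam m) \<le> K * ennreal m"
        using Rfun_trunc_ball_m_le_small_scale[OF m True] unfolding K_def .
      also have "\<dots> = ennreal (enn2real K * m)"
        using K m by (simp add: ennreal_mult ennreal_enn2real_if)
      also have "\<dots> \<le> ennreal ((enn2real K + R * 4 ^ CARD('n) / V) * m)"
        using c_terms_nonneg by (intro ennreal_leI) (simp add: algebra_simps)
      finally show ?thesis .
    next
      case False
      have "(1/4) ^ CARD('n) \<le> trunc_ball_scale k lam m ^ CARD('n)"
        using False by (intro power_mono) auto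
      then have "1 \<le> 4 ^ CARD('n) / V * m"
        using m by (simp add: trunc_ball_scale_power V_def power_divide field_simps)
      then have "R \<le> R * 4 ^ CARD('n) / V * m"
        using mult_left_mono[of 1 "4 ^ CARD('n) / V * m" R] by (simp add: R_def)
      then have "Rfun g (ball 0 1) \<le> ennreal ((enn2real K + R * 4 ^ CARD('n) / V) * m)"
        unfolding R using c_terms_nonneg by (intro ennreal_leI) (simp add: distrib_right)
      with Rfun_trunc_ball_m_le_Rfun_ball[OF m] show ?thesis
        by (rule order.trans)
    qed
  qed
qed

theorem lemma3p2:
  fixes k :: "'n::finite" and lam :: real
    and g :: "real^'n \<Rightarrow> real" and G :: "real \<Rightarrow> real"
  assumes "CARD('n) \<ge> 2"
    and "-1 < lam" and "lam < 1"
    and "R_admissible g"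
    and "G_admissible CARD('n) G"
  shows "\<exists>c::real. \<forall>m. 0 < m \<and> m \<le> measure lebesgue (trunc_ball k lam) \<longrightarrow>
           Rfun g (trunc_ball_m k lam m) \<le> ennreal (c * m) \<and>
           Gfun k G (trunc_ball_m k lam m) \<le> ennreal (c * m)"
proof -
  obtain cR :: real where cR: "0 \<le> cR"
    and R_le: "\<And>m. 0 < m \<Longrightarrow> m \<le> measure lebesgue (trunc_ball k lam) \<Longrightarrow>
                  Rfun g (trunc_ball_m k lam m) \<le> ennreal (cR * m)"
    using Rfun_trunc_ball_m_le assms(4) unfolding R_admissible_def by blast
  obtain cG :: real where cG: "0 \<le> cG"
    and G_le: "\<And>m. 0 < m \<Longrightarrow> m \<le> measure lebesgue (trunc_ball k lam) \<Longrightarrow>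
                  Gfun k G (trunc_ball_m k lam m) \<le> ennreal (cG * m)"
    using Gfun_trunc_ball_m_le assms(2,5) unfolding G_admissible_def by blast
  have "ennreal (cR * m) \<le> ennreal ((cR + cG) * m)"
    and "ennreal (cG * m) \<le> ennreal ((cR + cG) * m)" if "0 < m" for m
    using that cR cG by (auto intro!: ennreal_leI simp: distrib_right)
  then show ?thesis
    using R_le G_le by (blast intro: order.trans)
qed

end
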